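(* Let $(T_1,T_2)$ be an ordered binary forest on $\{1,\dots,m-1\}$, let $x_i=|L(T_i)|$ for $i=1,2$, and assume $x_1\ge x_2$. Let $T_0$ be the binary phylogenetic tree on $\{1,\dots,m\}$ with root $z$ having children $a$ and the leaf $m$, where $a$ has children the roots of $T_1$ and $T_2$. Let $T$ be a binary phylogenetic tree with $n$ leaves having $T_0$ as the subtree rooted at some node. If $\Phi(T)$ is minimum among all binary phylogenetic trees with $n$ leaves, then $x_1=x_2=1$.
   Context: A phylogenetic tree on a finite set $S$ is a rooted tree whose leaves are bijectively labeled by $S$, every internal node having at least two children; binary means exactly two children; a tree with $n$ leaves is one on $\{1,\dots,n\}$. $L(T)$ is the leaf set. An ordered binary $k$-forest on $S$ is a sequence of $k$ binary phylogenetic trees on pairwise disjoint sets with union $S$. The subtree rooted at a node $v$ is the subgraph induced on the descendants of $v$. The depth $\delta_T(v)$ is the number of arcs from the root to $v$; for leaves $i\ne j$, $\varphi_T(i,j)=\delta_T(LCA_T(i,j))$ ($LCA$ = lowest common ancestor), and $\Phi(T)$ is the sum of $\varphi_T(i,j)$ over all unordered pairs of distinct leaves. *)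

theory Defs
  imports Main "HOL-Library.Sublist"
begin

text \<open>The child order of the datatype is irrelevant; trees are compared up to swapping
  children via \<open>tree_iso\<close>.\<close>

datatype btree = Leaf nat | Node btree btree

fun leaves :: "btree \<Rightarrow> nat list" where
  "leaves (Leaf a) = [a]"
| "leaves (Node l r) = leaves l @ leaves r"

definition L :: "btree \<Rightarrow> nat set" where
  "L t = set (leaves t)"

definition phylo_on :: "nat set \<Rightarrow> btree \<Rightarrow> bool" where
  "phylo_on S t \<longleftrightarrow> distinct (leaves t) \<and> set (leaves t) = S"

definition forest2_on :: "nat set \<Rightarrow> btree \<Rightarrow> btree \<Rightarrow> bool" where
  "forest2_on S t1 t2 \<longleftrightarrow> phylo_on (L t1) t1 \<and> phylo_on (L t2) t2
      \<and> L t1 \<inter> L t2 = {} \<and> L t1 \<union> L t2 = S"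

text \<open>node positions as paths from the root (False = left, True = right)\<close>
fun pos :: "btree \<Rightarrow> bool list set" where
  "pos (Leaf a) = {[]}"
| "pos (Node l r) = {[]} \<union> Cons False ` pos l \<union> Cons True ` pos r"

fun sub :: "btree \<Rightarrow> bool list \<Rightarrow> btree" where
  "sub t [] = t"
| "sub (Node l r) (False # p) = sub l p"
| "sub (Node l r) (True # p) = sub r p"
| "sub (Leaf a) (b # p) = Leaf a"

inductive tree_iso :: "btree \<Rightarrow> btree \<Rightarrow> bool" where
  "tree_iso (Leaf a) (Leaf a)"
| "tree_iso l l' \<Longrightarrow> tree_iso r r' \<Longrightarrow> tree_iso (Node l r) (Node l' r')"
| "tree_iso l r' \<Longrightarrow> tree_iso r l' \<Longrightarrow> tree_iso (Node l r) (Node l' r')"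

definition leaf_pos :: "btree \<Rightarrow> nat \<Rightarrow> bool list" where
  "leaf_pos t i = (THE p. p \<in> pos t \<and> sub t p = Leaf i)"

text \<open>depth of the node at position p is its length; ancestors of p are its prefixes;
  \<open>phi t i j\<close> is the depth of the lowest common ancestor of leaves i and j\<close>
definition phi :: "btree \<Rightarrow> nat \<Rightarrow> nat \<Rightarrow> nat" where
  "phi t i j = Max {length v | v. v \<in> pos t \<and> prefix v (leaf_pos t i) \<and> prefix v (leaf_pos t j)}"

definition Phi :: "btree \<Rightarrow> nat" where
  "Phi t = (\<Sum>(i, j) \<in> {(i, j). i \<in> L t \<and> j \<in> L t \<and> i < j}. phi t i j)"

end

theory Submission imports Defs "HOL-Library.Multiset" begin

(* Phi has a recursive description: the pairs of leaves below the root
   split into pairs inside the left subtree, pairs inside the right subtree (each of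
   whose LCA depth grows by one) and pairs across the root (LCA depth 0), so
     Phi (Node l r) = Phi l + Phi r + C(|l|,2) + C(|r|,2).
   Hence Phi = cost, where cost sums C(|L(v)|,2) over all non-root nodes v.  The cost is
   additive under grafting a subtree with the same leaves at a position, and invariant
   under swapping children.  Replacing the cherry-like subtree ((T1,T2),m) of T by
   (T1,(T2,m)) changes the cost by C(x2+1,2) - C(x1+x2,2), which is negative as soon as
   x1 >= 2.  So in a Phi-minimal tree x1 = 1, and then x2 = 1 because 1 <= x2 <= x1. *)

text \<open>A finite set of size k has C(k,2) increasing pairs; this is the contribution of a
  subtree to Phi one level up.\<close>

lemma card_increasing_pairs:
  assumes "finite (A :: nat set)"
  shows "card {(i, j). i \<in> A \<and> j \<in> A \<and> i < j} = card A choose 2"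
proof -
  let ?P = "{(i, j). i \<in> A \<and> j \<in> A \<and> i < j}"
  let ?pair_set = "\<lambda>(i :: nat, j). {i, j}"
  have inj: "inj_on ?pair_set ?P"
    by (auto simp: inj_on_def doubleton_eq_iff)
  have "?pair_set ` ?P = {B. B \<subseteq> A \<and> card B = 2}"
  proof (intro equalityI subsetI)
    fix B assume "B \<in> {B. B \<subseteq> A \<and> card B = 2}"
    then obtain x y where B: "B = {x, y}" "x \<noteq> y" "B \<subseteq> A" by (auto simp: card_2_iff)
    then show "B \<in> ?pair_set ` ?P"
    proof (cases "x < y")
      case True
      then show ?thesis using B by (auto intro!: image_eqI[of _ _ "(x, y)"])
    next
      case False
      then show ?thesis using B by (auto intro!: image_eqI[of _ _ "(y, x)"])
    qed
  qed auto
  then show ?thesis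
    using card_image[OF inj] n_subsets[OF assms] by simp
qed

lemma finite_pos: "finite (pos t)"
  by (induction t) auto

lemma Nil_in_pos: "[] \<in> pos t"
  by (cases t) auto

lemma leaves_nonempty: "leaves t \<noteq> []"
  by (induction t) auto

lemma leaf_exists: "i \<in> set (leaves t) \<Longrightarrow> \<exists>p \<in> pos t. sub t p = Leaf i"
proof (induction t)
  case (Node l r)
  then consider "i \<in> set (leaves l)" | "i \<in> set (leaves r)" by auto
  then show ?case
  proof cases
    case 1
    then obtain p where "p \<in> pos l" "sub l p = Leaf i" using Node.IH(1) by blast
    then show ?thesis by (auto intro!: bexI[of _ "False # p"])
  next
    case 2
    then obtain p where "p \<in> pos r" "sub r p = Leaf i" using Node.IH(2) by blast
    then show ?thesis by (auto intro!: bexI[of _ "True # p"])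
  qed
qed auto

lemma leaves_sub_subset: "p \<in> pos t \<Longrightarrow> set (leaves (sub t p)) \<subseteq> set (leaves t)"
proof (induction t arbitrary: p)
  case (Node l r)
  then show ?case by (cases p) (auto, blast+)
qed auto

lemma leaf_position_unique:
  "\<lbrakk>distinct (leaves t); p \<in> pos t; q \<in> pos t; sub t p = Leaf i; sub t q = Leaf i\<rbrakk> \<Longrightarrow> p = q"
proof (induction t arbitrary: p q)
  case (Node l r)
  from Node.prems(2-5) obtain b p' c q' where pq: "p = b # p'" "q = c # q'"
    by (cases p; cases q) auto
  have "b = c"
  proof (rule ccontr)
    assume "b \<noteq> c"
    then have "i \<in> set (leaves l) \<and> i \<in> set (leaves r)"
      using Node.prems pq leaves_sub_subset[of p' l] leaves_sub_subset[of p' r]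
        leaves_sub_subset[of q' l] leaves_sub_subset[of q' r]
      by (cases b) force+
    then show False using Node.prems(1) by auto
  qed
  then show ?case using Node pq by (cases b) auto
qed auto

lemma leaf_pos_eqI: "\<lbrakk>distinct (leaves t); q \<in> pos t; sub t q = Leaf i\<rbrakk> \<Longrightarrow> leaf_pos t i = q"
  unfolding leaf_pos_def by (rule the_equality) (auto intro: leaf_position_unique)

lemma leaf_pos_in_pos:
  "\<lbrakk>distinct (leaves t); i \<in> set (leaves t)\<rbrakk> \<Longrightarrow> leaf_pos t i \<in> pos t \<and> sub t (leaf_pos t i) = Leaf i"
  using leaf_exists leaf_pos_eqI by metis

lemma leaf_pos_left:
  "\<lbrakk>distinct (leaves (Node l r)); i \<in> set (leaves l)\<rbrakk> \<Longrightarrow> leaf_pos (Node l r) i = False # leaf_pos l i"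
  using leaf_pos_in_pos[of l i] by (intro leaf_pos_eqI) auto

lemma leaf_pos_right:
  "\<lbrakk>distinct (leaves (Node l r)); i \<in> set (leaves r)\<rbrakk> \<Longrightarrow> leaf_pos (Node l r) i = True # leaf_pos r i"
  using leaf_pos_in_pos[of r i] by (intro leaf_pos_eqI) auto

section \<open>The recursion for phi and Phi\<close>

definition common_depth :: "btree \<Rightarrow> bool list \<Rightarrow> bool list \<Rightarrow> nat" where
  "common_depth t P R = Max {length v | v. v \<in> pos t \<and> prefix v P \<and> prefix v R}"

lemma phi_common_depth: "phi t i j = common_depth t (leaf_pos t i) (leaf_pos t j)"
  unfolding phi_def common_depth_def by simp

text \<open>Two positions in the same child share the root plus their common ancestors there.\<close>

lemma common_depth_same_child:
  "common_depth (Node l r) (b # P) (b # R) = Suc (common_depth (if b then r else l) P R)"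
proof -
  let ?t = "if b then r else l"
  let ?S = "{length v | v. v \<in> pos ?t \<and> prefix v P \<and> prefix v R}"
  have split: "{length v | v. v \<in> pos (Node l r) \<and> prefix v (b # P) \<and> prefix v (b # R)}
      = insert 0 (Suc ` ?S)"
  proof (intro equalityI subsetI)
    fix x assume "x \<in> insert 0 (Suc ` ?S)"
    then consider "x = 0" | v where "x = Suc (length v)" "v \<in> pos ?t" "prefix v P" "prefix v R"
      by auto
    then show "x \<in> {length v | v. v \<in> pos (Node l r) \<and> prefix v (b # P) \<and> prefix v (b # R)}"
      by cases (auto intro!: exI[of _ "[]"] exI[of _ "b # v" for v] split: if_splits)
  qed (cases b; auto simp: prefix_Cons)
  have fin: "finite ?S" using finite_pos[of ?t] by simp
  have "0 \<in> ?S" using Nil_in_pos[of ?t] by (auto intro!: exI[of _ "[]"])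
  then have ne: "?S \<noteq> {}" by blast
  have "Max (Suc ` ?S) = Suc (Max ?S)"
    using mono_Max_commute[of Suc ?S] fin ne by (simp add: mono_def)
  then show ?thesis unfolding common_depth_def split using fin ne by simp
qed

text \<open>Positions in different children only share the root.\<close>

lemma common_depth_different_children:
  "b \<noteq> c \<Longrightarrow> common_depth (Node l r) (b # P) (c # R) = 0"
proof -
  assume "b \<noteq> c"
  then have "{length v | v. v \<in> pos (Node l r) \<and> prefix v (b # P) \<and> prefix v (c # R)} = {0}"
    by (auto simp: prefix_Cons)
  then show ?thesis unfolding common_depth_def by simp
qed

lemma phi_same_child:
  assumes "distinct (leaves (Node l r))"
  shows "\<lbrakk>i \<in> set (leaves l); j \<in> set (leaves l)\<rbrakk> \<Longrightarrow> phi (Node l r) i j = Suc (phi l i j)"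
    and "\<lbrakk>i \<in> set (leaves r); j \<in> set (leaves r)\<rbrakk> \<Longrightarrow> phi (Node l r) i j = Suc (phi r i j)"
  using assms common_depth_same_child[of l r False] common_depth_same_child[of l r True]
  by (simp_all add: phi_common_depth leaf_pos_left leaf_pos_right)

lemma phi_different_children:
  assumes "distinct (leaves (Node l r))"
    and "(i \<in> set (leaves l) \<and> j \<in> set (leaves r)) \<or> (i \<in> set (leaves r) \<and> j \<in> set (leaves l))"
  shows "phi (Node l r) i j = 0"
  using assms by (auto simp: phi_common_depth leaf_pos_left leaf_pos_right common_depth_different_children)

lemma Phi_Node:
  assumes d: "distinct (leaves (Node l r))"
  shows "Phi (Node l r) = Phi l + Phi r + (length (leaves l) choose 2) + (length (leaves r) choose 2)"
proof -
  let ?P = "\<lambda>A. {(i, j). i \<in> A \<and> j \<in> A \<and> (i :: nat) < j}"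
  let ?l = "set (leaves l)" and ?r = "set (leaves r)"
  let ?X = "{(i, j). ((i \<in> ?l \<and> j \<in> ?r) \<or> (i \<in> ?r \<and> j \<in> ?l)) \<and> i < j}"
  let ?phi = "\<lambda>(i, j). phi (Node l r) i j"
  have dl: "distinct (leaves l)" and dr: "distinct (leaves r)" and disj: "?l \<inter> ?r = {}"
    using d by auto
  have fin: "finite (?P A)" if "finite A" for A
    by (rule finite_subset[of _ "A \<times> A"]) (use that in auto)
  have finX: "finite ?X"
    by (rule finite_subset[of _ "(?l \<union> ?r) \<times> (?l \<union> ?r)"]) auto
  have pairs_split: "?P (L (Node l r)) = ?P ?l \<union> (?P ?r \<union> ?X)"
    unfolding L_def by auto
  have "Phi (Node l r) = sum ?phi (?P ?l \<union> (?P ?r \<union> ?X))"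
    unfolding Phi_def pairs_split ..
  also have "\<dots> = sum ?phi (?P ?l) + sum ?phi (?P ?r \<union> ?X)"
    by (rule sum.union_disjoint) (use fin finX disj in auto)
  also have "\<dots> = sum ?phi (?P ?l) + (sum ?phi (?P ?r) + sum ?phi ?X)"
    by (subst sum.union_disjoint) (use fin finX disj in auto)
  finally have "Phi (Node l r) = sum ?phi (?P ?l) + (sum ?phi (?P ?r) + sum ?phi ?X)" .
  moreover have "sum ?phi ?X = 0"
    using d by (intro sum.neutral) (auto simp: phi_different_children)
  moreover have "sum ?phi (?P ?l) = Phi l + (length (leaves l) choose 2)"
  proof -
    have "sum ?phi (?P ?l) = (\<Sum>(i, j) \<in> ?P ?l. phi l i j + 1)"
      using d by (intro sum.cong) (auto simp: phi_same_child)
    also have "\<dots> = Phi l + card (?P ?l)"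
      unfolding Phi_def L_def by (simp add: split_def sum_Suc)
    also have "card (?P ?l) = length (leaves l) choose 2"
      using card_increasing_pairs[of ?l] distinct_card[OF dl] by simp
    finally show ?thesis .
  qed
  moreover have "sum ?phi (?P ?r) = Phi r + (length (leaves r) choose 2)"
  proof -
    have "sum ?phi (?P ?r) = (\<Sum>(i, j) \<in> ?P ?r. phi r i j + 1)"
      using d by (intro sum.cong) (auto simp: phi_same_child)
    also have "\<dots> = Phi r + card (?P ?r)"
      unfolding Phi_def L_def by (simp add: split_def sum_Suc)
    also have "card (?P ?r) = length (leaves r) choose 2"
      using card_increasing_pairs[of ?r] distinct_card[OF dr] by simp
    finally show ?thesis .
  qed
  ultimately show ?thesis by simp
qed

section \<open>The cost function\<close>

text \<open>The cost of a tree: the sum of C(|L(v)|,2) over all non-root nodes v.  It equals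
  Phi on trees with distinct labels but makes sense for every tree.\<close>

fun cost :: "btree \<Rightarrow> nat" where
  "cost (Leaf a) = 0"
| "cost (Node l r) = cost l + cost r + (length (leaves l) choose 2) + (length (leaves r) choose 2)"

lemma Phi_eq_cost: "distinct (leaves t) \<Longrightarrow> Phi t = cost t"
proof (induction t)
  case (Leaf a)
  have no_pairs: "{(i, j). i \<in> L (Leaf a) \<and> j \<in> L (Leaf a) \<and> (i :: nat) < j} = {}"
    by (auto simp: L_def)
  show ?case unfolding Phi_def no_pairs by simp
next
  case (Node l r)
  then show ?case by (simp add: Phi_Node)
qed

lemma tree_iso_leaves_cost: "tree_iso a b \<Longrightarrow> mset (leaves a) = mset (leaves b) \<and> cost a = cost b"
  by (induction rule: tree_iso.induct) (auto simp: add_ac, metis size_mset, metis size_mset add.commute)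

fun graft :: "btree \<Rightarrow> bool list \<Rightarrow> btree \<Rightarrow> btree" where
  "graft t [] s = s"
| "graft (Node l r) (False # p) s = Node (graft l p s) r"
| "graft (Node l r) (True # p) s = Node l (graft r p s)"
| "graft (Leaf a) (b # p) s = Leaf a"

lemma graft_leaves:
  "\<lbrakk>p \<in> pos t; mset (leaves s) = mset (leaves (sub t p))\<rbrakk> \<Longrightarrow> mset (leaves (graft t p s)) = mset (leaves t)"
  by (induction t arbitrary: p) auto

lemma graft_length:
  "\<lbrakk>p \<in> pos t; length (leaves s) = length (leaves (sub t p))\<rbrakk> \<Longrightarrow> length (leaves (graft t p s)) = length (leaves t)"
  by (induction t arbitrary: p) auto

text \<open>The cost is local: only the grafted subtree's cost changes, since the leaf counts
  of all nodes outside it are unaffected.\<close>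

lemma graft_cost:
  "\<lbrakk>p \<in> pos t; length (leaves s) = length (leaves (sub t p))\<rbrakk> \<Longrightarrow> cost (graft t p s) + cost (sub t p) = cost t + cost s"
  by (induction t arbitrary: p) (auto simp: graft_length)

section \<open>The rotation inequality\<close>

text \<open>Rotating ((A,B),c) into (A,(B,c)) replaces C(|A|+|B|,2) by C(|B|+1,2) in the cost,
  a strict decrease as soon as A has at least two leaves.\<close>

lemma rotation_decreases_cost:
  assumes "2 \<le> length (leaves A)"
  shows "cost (Node A (Node B (Leaf c))) < cost (Node (Node A B) (Leaf c))"
proof -
  let ?a = "length (leaves A)" and ?b = "length (leaves B)"
  have "(Suc ?b choose 2) < Suc ?b + (Suc ?b choose 2)" by simp
  also have "\<dots> = Suc (Suc ?b) choose 2" by (simp add: numeral_2_eq_2)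
  also have "\<dots> \<le> ?a + ?b choose 2" using assms by (intro binomial_right_mono) simp
  finally show ?thesis by simp
qed

text \<open>Hence a tree containing a subtree ((A,B),c) with |A| >= 2 is not Phi-minimal:
  grafting the rotated subtree yields a tree on the same leaves with smaller Phi.\<close>

lemma rotation_improves_Phi:
  assumes T: "phylo_on S T" and p: "p \<in> pos T"
    and iso: "tree_iso (sub T p) (Node (Node A B) (Leaf c))"
    and A: "2 \<le> length (leaves A)"
  shows "\<exists>T'. phylo_on S T' \<and> Phi T' < Phi T"
proof -
  let ?rot = "Node A (Node B (Leaf c))"
  have same_leaves: "mset (leaves ?rot) = mset (leaves (sub T p))"
    and cost_sub: "cost (sub T p) = cost (Node (Node A B) (Leaf c))"
    using tree_iso_leaves_cost[OF iso] by (auto simp: add_ac)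
  define T' where "T' = graft T p ?rot"
  have dT: "distinct (leaves T)" using T by (simp add: phylo_on_def)
  have "mset (leaves T') = mset (leaves T)"
    unfolding T'_def using graft_leaves[OF p same_leaves] .
  then have T': "phylo_on S T'"
    using T by (metis phylo_on_def mset_eq_imp_distinct_iff mset_eq_setD)
  have "cost T' + cost (sub T p) = cost T + cost ?rot"
    unfolding T'_def using graft_cost[OF p] same_leaves by (metis size_mset)
  then have "cost T' < cost T"
    using rotation_decreases_cost[OF A, of B c] cost_sub by linarith
  then have "Phi T' < Phi T"
    using Phi_eq_cost dT T' by (simp add: phylo_on_def)
  then show ?thesis using T' by blast
qed

theorem mainTheorem9:
  fixes T1 T2 T :: btree and m n :: nat
  assumes "forest2_on {1..m - 1} T1 T2"
    and "card (L T1) \<ge> card (L T2)"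
    and "phylo_on {1..n} T"
    and "\<exists>p \<in> pos T. tree_iso (sub T p) (Node (Node T1 T2) (Leaf m))"
    and "\<forall>T'. phylo_on {1..n} T' \<longrightarrow> Phi T \<le> Phi T'"
  shows "card (L T1) = 1 \<and> card (L T2) = 1"
proof -
  have card_leaves: "card (L T1) = length (leaves T1)" "card (L T2) = length (leaves T2)"
    using assms(1) distinct_card by (auto simp: forest2_on_def phylo_on_def L_def)
  have "\<not> 2 \<le> length (leaves T1)"
    using rotation_improves_Phi[OF assms(3)] assms(4,5) leD by blast
  moreover have "length (leaves T2) \<noteq> 0"
    using leaves_nonempty by simp
  ultimately show ?thesis
    using assms(2) card_leaves by linarith
qed

end
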